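(* Let $\lambda\in P$ and integers $a\ge2$, $b\ge1$, $d\ge1$, $m\ge1$. (i) If $\lambda$ has a neighborhood of type $(a+d,b)$, then $\lambda$ has $d+1$ neighborhoods of type $(a,b)$. (ii) If $\lambda$ has a neighborhood of type $(m(a-1)+1,mb)$, then $\lambda$ has a neighborhood of type $(a,b)$.
   Context: Let $P=\mathbb Z^n$. For $\lambda\in P$, $\rho(\lambda)$ is the unique permutation of $(\frac{n-1}2,\frac{n-3}2,\dots,-\frac{n-1}2)$ with $\rho(\lambda)_i>\rho(\lambda)_j$ iff $\lambda_i>\lambda_j$ or ($\lambda_i=\lambda_j$ and $i<j$). For integers $a\ge2,b\ge1$, an ordered pair $(i,j)$ of indices is a neighborhood of type $(a,b)$ in $\lambda$ if $\rho(\lambda)_i-\rho(\lambda)_j=a-1$ and either $\lambda_i-\lambda_j\le b-1$, or $\lambda_i-\lambda_j=b$ and $j<i$. (Distinct pairs count as distinct neighborhoods.) *)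

theory Defs
  imports Complex_Main
begin

text \<open>A weight lambda in P = Z^n is an integer list of length n; indices are 0..n-1.\<close>

definition pos :: "int list \<Rightarrow> nat \<Rightarrow> nat" where
  "pos lam i = card {j. j < length lam \<and> (lam!j > lam!i \<or> (lam!j = lam!i \<and> j < i))}"

text \<open>rho(lambda)_i: the entry of ((n-1)/2, (n-3)/2, ..., -(n-1)/2) placed at index i.\<close>
definition rho :: "int list \<Rightarrow> nat \<Rightarrow> real" where
  "rho lam i = (real (length lam) - 1) / 2 - real (pos lam i)"

definition nbhd :: "int list \<Rightarrow> int \<Rightarrow> int \<Rightarrow> nat \<times> nat \<Rightarrow> bool" where
  "nbhd lam a b p = (case p of (i, j) \<Rightarrow>
     i < length lam \<and> j < length lam \<and>
     rho lam i - rho lam j = of_int (a - 1) \<and>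
     (lam!i - lam!j \<le> b - 1 \<or> (lam!i - lam!j = b \<and> j < i)))"

definition nbhds :: "int list \<Rightarrow> int \<Rightarrow> int \<Rightarrow> (nat \<times> nat) set" where
  "nbhds lam a b = {p. nbhd lam a b p}"

end

theory Submission
  imports Defs
begin

(*
  Order the indices by the total order defining rho and call pos lam i the place of i in it, so
  that rho lam i - rho lam j = pos lam j - pos lam i. A neighbourhood of type (a, b) is then a
  window of places of length a - 1 whose end points satisfy the drop condition small_gap for b.
  Along places lam is weakly decreasing, with ties broken by increasing index, so the drop
  condition passes to every subwindow; a window of length a + d - 1 contains d + 1 windows of
  length a - 1, which gives (i). The drop condition is also additive: small_gap for b + c
  across i, j forces small_gap for b across i, k or for c across k, j. Splitting a window of
  length m (a - 1) into m consecutive windows of length a - 1 gives (ii).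
*)

definition precedes :: "int list \<Rightarrow> nat \<Rightarrow> nat \<Rightarrow> bool" where
  "precedes lam i j \<longleftrightarrow> lam!i > lam!j \<or> (lam!i = lam!j \<and> i < j)"

definition small_gap :: "int list \<Rightarrow> int \<Rightarrow> nat \<Rightarrow> nat \<Rightarrow> bool" where
  "small_gap lam b i j \<longleftrightarrow> lam!i - lam!j \<le> b - 1 \<or> (lam!i - lam!j = b \<and> j < i)"

lemma small_gap_mono:
  assumes "small_gap lam b i j"
    and "i = i' \<or> precedes lam i i'" and "j' = j \<or> precedes lam j' j"
  shows "small_gap lam b i' j'"
  using assms unfolding small_gap_def precedes_def by auto

lemma small_gap_add_cases:
  assumes "small_gap lam (b + c) i j"
  shows "small_gap lam b i k \<or> small_gap lam c k j"
  using assms unfolding small_gap_def by auto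

lemma small_gap_telescope:
  assumes "small_gap lam (int M * b) (f 0) (f M)"
  shows "\<exists>k<M. small_gap lam b (f k) (f (Suc k))"
  using assms
proof (induction M)
  case 0
  then show ?case
    by (simp add: small_gap_def)
next
  case (Suc M)
  then have "small_gap lam (int M * b + b) (f 0) (f (Suc M))"
    by (simp add: algebra_simps)
  then have "small_gap lam (int M * b) (f 0) (f M) \<or> small_gap lam b (f M) (f (Suc M))"
    by (rule small_gap_add_cases)
  then show ?case
    using Suc.IH less_SucI by blast
qed

lemma pos_eq_card_precedes: "pos lam i = card {j. j < length lam \<and> precedes lam j i}"
  unfolding pos_def precedes_def by simp

lemma pos_less_length:
  assumes "i < length lam"
  shows "pos lam i < length lam"
proof -
  have "{j. j < length lam \<and> precedes lam j i} \<subseteq> {..<length lam} - {i}"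
    by (auto simp: precedes_def)
  then have "card {j. j < length lam \<and> precedes lam j i} \<le> card ({..<length lam} - {i})"
    by (intro card_mono) auto
  also have "\<dots> = length lam - 1"
    using assms by simp
  finally show ?thesis
    using assms unfolding pos_eq_card_precedes by linarith
qed

lemma pos_less_pos_if_precedes:
  assumes "i < length lam" and "j < length lam" and "precedes lam i j"
  shows "pos lam i < pos lam j"
proof -
  have "{k. k < length lam \<and> precedes lam k i} \<subset> {k. k < length lam \<and> precedes lam k j}"
    using assms by (auto simp: precedes_def)
  then show ?thesis
    unfolding pos_eq_card_precedes by (intro psubset_card_mono) auto
qed

lemma pos_less_pos_iff:
  assumes "i < length lam" and "j < length lam"
  shows "pos lam i < pos lam j \<longleftrightarrow> precedes lam i j"
proof
  assume less: "pos lam i < pos lam j"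
  show "precedes lam i j"
  proof (rule ccontr)
    assume "\<not> precedes lam i j"
    then have "i = j \<or> precedes lam j i"
      unfolding precedes_def by auto
    then show False
      using less pos_less_pos_if_precedes[OF assms(2,1)] by auto
  qed
qed (use pos_less_pos_if_precedes assms in auto)

lemma inj_on_pos: "inj_on (pos lam) {..<length lam}"
proof (rule inj_onI, rule ccontr)
  fix i j
  assume "i \<in> {..<length lam}" and "j \<in> {..<length lam}"
    and same_pos: "pos lam i = pos lam j" and "i \<noteq> j"
  then have "precedes lam i j \<or> precedes lam j i"
    unfolding precedes_def by auto
  then show False
    using same_pos pos_less_pos_if_precedes \<open>i \<in> _\<close> \<open>j \<in> _\<close> by fastforce
qed

lemma pos_image: "pos lam ` {..<length lam} = {..<length lam}"
proof (rule card_subset_eq)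
  show "pos lam ` {..<length lam} \<subseteq> {..<length lam}"
    using pos_less_length by auto
  show "card (pos lam ` {..<length lam}) = card {..<length lam}"
    using card_image[OF inj_on_pos] .
qed simp

definition index_at :: "int list \<Rightarrow> nat \<Rightarrow> nat" where
  "index_at lam k = the_inv_into {..<length lam} (pos lam) k"

lemma pos_in_image_pos: "k < length lam \<Longrightarrow> k \<in> pos lam ` {..<length lam}"
  using pos_image by simp

lemma index_at_less_length: "k < length lam \<Longrightarrow> index_at lam k < length lam"
  unfolding index_at_def
  using the_inv_into_into[OF inj_on_pos pos_in_image_pos order_refl] by simp

lemma pos_index_at: "k < length lam \<Longrightarrow> pos lam (index_at lam k) = k"
  unfolding index_at_def using f_the_inv_into_f[OF inj_on_pos pos_in_image_pos] .

lemma index_at_pos: "i < length lam \<Longrightarrow> index_at lam (pos lam i) = i"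
  unfolding index_at_def using the_inv_into_f_f[OF inj_on_pos] by simp

lemma precedes_index_at:
  assumes "k < l" and "l < length lam"
  shows "precedes lam (index_at lam k) (index_at lam l)"
proof -
  have "index_at lam k < length lam" and "index_at lam l < length lam"
    using assms index_at_less_length by simp_all
  moreover have "pos lam (index_at lam k) < pos lam (index_at lam l)"
    using assms pos_index_at by simp
  ultimately show ?thesis
    using pos_less_pos_iff by blast
qed

lemma index_at_mono:
  assumes "k \<le> l" and "l < length lam"
  shows "index_at lam k = index_at lam l \<or> precedes lam (index_at lam k) (index_at lam l)"
  using assms precedes_index_at by (cases "k = l") auto

lemma nbhd_iff_pos:
  "nbhd lam a b (i, j) \<longleftrightarrow> i < length lam \<and> j < length lam \<and>
     int (pos lam j) = int (pos lam i) + (a - 1) \<and> small_gap lam b i j"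
proof -
  have "rho lam i - rho lam j = real (pos lam j) - real (pos lam i)"
    unfolding rho_def by simp
  then have "rho lam i - rho lam j = of_int (a - 1) \<longleftrightarrow>
      int (pos lam j) = int (pos lam i) + (a - 1)"
    by linarith
  then show ?thesis
    unfolding nbhd_def small_gap_def by auto
qed

lemma nbhd_index_atI:
  assumes "p + N < length lam" and "small_gap lam b (index_at lam p) (index_at lam (p + N))"
  shows "nbhd lam (int N + 1) b (index_at lam p, index_at lam (p + N))"
  using assms index_at_less_length pos_index_at unfolding nbhd_iff_pos by auto

lemma nbhd_posD:
  assumes "nbhd lam (int N + 1) b (i, j)"
  shows "pos lam j = pos lam i + N" and "pos lam j < length lam"
    and "small_gap lam b (index_at lam (pos lam i)) (index_at lam (pos lam i + N))"
proof -
  show pos_j: "pos lam j = pos lam i + N"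
    using assms unfolding nbhd_iff_pos by simp
  show "pos lam j < length lam"
    using assms pos_less_length unfolding nbhd_iff_pos by blast
  show "small_gap lam b (index_at lam (pos lam i)) (index_at lam (pos lam i + N))"
    using assms index_at_pos unfolding nbhd_iff_pos pos_j[symmetric] by simp
qed

lemma finite_nbhds: "finite (nbhds lam a b)"
  by (rule finite_subset[of _ "{..<length lam} \<times> {..<length lam}"])
    (auto simp: nbhds_def nbhd_def)

lemma small_gap_subwindow:
  assumes "p \<le> p'" and "p' \<le> q'" and "q' \<le> q" and "q < length lam"
    and "small_gap lam b (index_at lam p) (index_at lam q)"
  shows "small_gap lam b (index_at lam p') (index_at lam q')"
  using assms(5) by (rule small_gap_mono) (use assms(1-4) index_at_mono in auto)

lemma card_nbhds_ge:
  assumes "nbhd lam (int (N + D) + 1) b (i, j)"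
  shows "D + 1 \<le> card (nbhds lam (int N + 1) b)"
proof -
  define p where "p = pos lam i"
  note window = nbhd_posD[OF assms, folded p_def]
  have end_less: "p + (N + D) < length lam"
    using window by simp
  let ?nbhd_at = "\<lambda>k. (index_at lam (p + k), index_at lam (p + k + N))"
  have "?nbhd_at ` {..D} \<subseteq> nbhds lam (int N + 1) b"
  proof
    fix x
    assume "x \<in> ?nbhd_at ` {..D}"
    then obtain k where "k \<le> D" and x: "x = ?nbhd_at k"
      by auto
    have "small_gap lam b (index_at lam (p + k)) (index_at lam (p + k + N))"
      by (rule small_gap_subwindow[OF _ _ _ end_less window(3)]) (use \<open>k \<le> D\<close> in simp_all)
    moreover have "p + k + N < length lam"
      using end_less \<open>k \<le> D\<close> by simp
    ultimately show "x \<in> nbhds lam (int N + 1) b"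
      unfolding nbhds_def x using nbhd_index_atI by simp
  qed
  then have "card (?nbhd_at ` {..D}) \<le> card (nbhds lam (int N + 1) b)"
    by (rule card_mono[OF finite_nbhds])
  moreover have "inj_on ?nbhd_at {..D}"
  proof (rule inj_onI)
    fix k l
    assume "k \<in> {..D}" and "l \<in> {..D}" and "?nbhd_at k = ?nbhd_at l"
    then have same_index: "index_at lam (p + k) = index_at lam (p + l)"
      by simp
    have "p + k = pos lam (index_at lam (p + k))"
      using end_less \<open>k \<in> {..D}\<close> pos_index_at by simp
    also have "\<dots> = p + l"
      unfolding same_index using end_less \<open>l \<in> {..D}\<close> pos_index_at by simp
    finally show "k = l"
      by simp
  qed
  ultimately show ?thesis
    by (simp add: card_image)
qed

lemma nbhds_nonempty_if_scaled_nbhd: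
  assumes "nbhd lam (int (M * N) + 1) (int M * b) (i, j)"
  shows "nbhds lam (int N + 1) b \<noteq> {}"
proof -
  define p where "p = pos lam i"
  note window = nbhd_posD[OF assms, folded p_def]
  let ?step = "\<lambda>k. index_at lam (p + k * N)"
  obtain k where "k < M" and gap: "small_gap lam b (?step k) (?step (Suc k))"
    using small_gap_telescope[of lam M b ?step] window by auto
  have "p + k * N + N \<le> p + M * N"
    using \<open>k < M\<close> mult_le_mono1[of "Suc k" M N] by simp
  moreover have "small_gap lam b (index_at lam (p + k * N)) (index_at lam (p + k * N + N))"
    using gap by (simp add: ac_simps)
  ultimately have "nbhd lam (int N + 1) b (index_at lam (p + k * N), index_at lam (p + k * N + N))"
    using nbhd_index_atI window by simp
  then show ?thesis
    unfolding nbhds_def by auto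
qed

theorem lemma4p2:
  fixes lam :: "int list" and a b d m :: int
  assumes "a \<ge> 2" and "b \<ge> 1" and "d \<ge> 1" and "m \<ge> 1"
  shows "(nbhds lam (a + d) b \<noteq> {} \<longrightarrow> int (card (nbhds lam a b)) \<ge> d + 1)
       \<and> (nbhds lam (m * (a - 1) + 1) (m * b) \<noteq> {} \<longrightarrow> nbhds lam a b \<noteq> {})"
proof -
  obtain N D M :: nat where a: "a = int N + 1" and d: "d = int D" and m: "m = int M"
    using assms zero_le_imp_eq_int[of "a - 1"] zero_le_imp_eq_int[of d] zero_le_imp_eq_int[of m]
    by (auto simp: algebra_simps)
  have "int (card (nbhds lam a b)) \<ge> d + 1" if "nbhds lam (a + d) b \<noteq> {}"
  proof -
    from that obtain i j where "nbhd lam (int (N + D) + 1) b (i, j)"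
      unfolding nbhds_def a d by (auto simp: ac_simps)
    then show ?thesis
      using card_nbhds_ge unfolding a d by fastforce
  qed
  moreover have "nbhds lam a b \<noteq> {}" if "nbhds lam (m * (a - 1) + 1) (m * b) \<noteq> {}"
  proof -
    from that obtain i j where "nbhd lam (int (M * N) + 1) (int M * b) (i, j)"
      unfolding nbhds_def a m by auto
    then show ?thesis
      unfolding a by (rule nbhds_nonempty_if_scaled_nbhd)
  qed
  ultimately show ?thesis
    by blast
qed

end
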